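(* Let $\tau\ge1$ and let $\mathcal C$ be any finite set of candidates. Form the pairwise majority graph on $\mathcal C$ in which, for each pair, the winner is determined by Weighted Majority Rule 1. Then every candidate in the uncovered set of this graph has distortion at most $$\min\Big\{\max\big\{\tfrac{3\tau-1}{\tau+1},\tfrac{\tau+2}{\tau}\big\}+2,\ \max\big\{(\tfrac{3\tau-1}{\tau+1})^2,(\tfrac{\tau+2}{\tau})^2\big\}\Big\}.$$
   Context: Voters $N=\{1,\dots,n\}$ and candidates $\mathcal C$ are points of an arbitrary metric space $(X,d)$. Voter $i$ prefers $P$ to $Q$ only if $d(i,P)\le d(i,Q)$, with preference strength $\alpha_i^{PQ}=d(i,Q)/d(i,P)\ge1$. $SC(Y)=\sum_{i\in N}d(i,Y)$. Distortion of a candidate $P$ is $SC(P)/\min_{Z\in\mathcal C}SC(Z)$. Weighted Majority Rule 1 for a pair $P,Q$: voters whose preference between $P$ and $Q$ has strength $>\tau$ are strong, others weak; if $\tau\ge\sqrt2+1$ strong voters get weight $\frac{\tau+1}{\tau-1}$, weak voters weight $1$; if $\tau<\sqrt2+1$ strong voters get weight $\tau$, weak voters weight $1$; the candidate with larger total weight of supporters wins the pair (ties broken arbitrarily). A candidate $P$ is in the uncovered set of the resulting tournament if for every other candidate $Z$, either $P$ beats $Z$, or there is a candidate $Q$ such that $P$ beats $Q$ and $Q$ beats $Z$. *)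

theory Defs
  imports "HOL-Analysis.Analysis"
begin

text \<open>Voter i (located at vloc i) prefers P over Q (candidates located at cloc P, cloc Q)
  with strength d(i,Q)/d(i,P) > tau. Written multiplicatively so that d(i,P) = 0 < d(i,Q)
  counts as infinite strength and d(i,P) = d(i,Q) = 0 as strength 1 (weak).\<close>
definition strong_pref ::
  "('a \<Rightarrow> 'a \<Rightarrow> real) \<Rightarrow> ('v \<Rightarrow> 'a) \<Rightarrow> ('c \<Rightarrow> 'a) \<Rightarrow> real \<Rightarrow> 'v \<Rightarrow> 'c \<Rightarrow> 'c \<Rightarrow> bool" where
  "strong_pref d vloc cloc tau i P Q \<longleftrightarrow> d (vloc i) (cloc Q) > tau * d (vloc i) (cloc P)"

definition wmr1_weight :: "real \<Rightarrow> bool \<Rightarrow> real" where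
  "wmr1_weight tau is_strong =
     (if is_strong then (if tau \<ge> sqrt 2 + 1 then (tau + 1) / (tau - 1) else tau) else 1)"

definition wmr1_support ::
  "('a \<Rightarrow> 'a \<Rightarrow> real) \<Rightarrow> 'v set \<Rightarrow> ('v \<Rightarrow> 'a) \<Rightarrow> ('c \<Rightarrow> 'a) \<Rightarrow> ('v \<Rightarrow> 'c \<Rightarrow> 'c \<Rightarrow> bool)
     \<Rightarrow> real \<Rightarrow> 'c \<Rightarrow> 'c \<Rightarrow> real" where
  "wmr1_support d N vloc cloc pref tau P Q =
     (\<Sum>i\<in>{i\<in>N. pref i P Q}. wmr1_weight tau (strong_pref d vloc cloc tau i P Q))"

definition consistent_prefs ::
  "('a \<Rightarrow> 'a \<Rightarrow> real) \<Rightarrow> 'v set \<Rightarrow> ('v \<Rightarrow> 'a) \<Rightarrow> 'c set \<Rightarrow> ('c \<Rightarrow> 'a)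
     \<Rightarrow> ('v \<Rightarrow> 'c \<Rightarrow> 'c \<Rightarrow> bool) \<Rightarrow> bool" where
  "consistent_prefs d N vloc C cloc pref \<longleftrightarrow>
     (\<forall>i\<in>N. \<forall>P\<in>C. \<forall>Q\<in>C. P \<noteq> Q \<longrightarrow>
        (pref i P Q \<longleftrightarrow> \<not> pref i Q P) \<and>
        (pref i P Q \<longrightarrow> d (vloc i) (cloc P) \<le> d (vloc i) (cloc Q)))"

definition wmr1_tournament ::
  "('a \<Rightarrow> 'a \<Rightarrow> real) \<Rightarrow> 'v set \<Rightarrow> ('v \<Rightarrow> 'a) \<Rightarrow> 'c set \<Rightarrow> ('c \<Rightarrow> 'a)
     \<Rightarrow> ('v \<Rightarrow> 'c \<Rightarrow> 'c \<Rightarrow> bool) \<Rightarrow> real \<Rightarrow> ('c \<Rightarrow> 'c \<Rightarrow> bool) \<Rightarrow> bool" where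
  "wmr1_tournament d N vloc C cloc pref tau beats \<longleftrightarrow>
     (\<forall>P\<in>C. \<forall>Q\<in>C. P \<noteq> Q \<longrightarrow>
        (beats P Q \<longleftrightarrow> \<not> beats Q P) \<and>
        (beats P Q \<longrightarrow> wmr1_support d N vloc cloc pref tau P Q \<ge> wmr1_support d N vloc cloc pref tau Q P))"

definition uncovered :: "'c set \<Rightarrow> ('c \<Rightarrow> 'c \<Rightarrow> bool) \<Rightarrow> 'c \<Rightarrow> bool" where
  "uncovered C beats P \<longleftrightarrow> P \<in> C \<and>
     (\<forall>Z\<in>C. Z \<noteq> P \<longrightarrow> beats P Z \<or> (\<exists>Q\<in>C. beats P Q \<and> beats Q Z))"

definition social_cost ::
  "('a \<Rightarrow> 'a \<Rightarrow> real) \<Rightarrow> 'v set \<Rightarrow> ('v \<Rightarrow> 'a) \<Rightarrow> 'a \<Rightarrow> real" where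
  "social_cost d N vloc y = (\<Sum>i\<in>N. d (vloc i) y)"

end

theory Submission
  imports Defs
begin

text \<open>
  Suppose P beats Q. Bound each voter's contribution to a cost difference, such as
  d(i,P) - f d(i,Q), by L times the voter's signed WMR1 weight (negative for supporters
  of P), with a multiplier L \<ge> 0 common to all voters; summed over the voters, the WMR1
  condition makes the total nonpositive. With L = d(P,Q)/w, w the weight of a strong
  voter, and f = max((3\<tau>-1)/(\<tau>+1), (\<tau>+2)/\<tau>), this gives SC(P) \<le> f SC(Q). With a
  multiplier depending on d(Z,P) and d(Z,Q) it gives SC(P) \<le> SC(Q) + 2 SC(Z) for every Z,
  except for 2 < \<tau> < 3, where f < 2 and hence f^2 \<le> f + 2 anyway. An uncovered
  candidate reaches every Z by a path of at most two edges.
\<close>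

lemma wmr1_weight_weak [simp]: "wmr1_weight tau False = 1"
  by (simp add: wmr1_weight_def)

lemma wmr1_weight_strong_small: "tau < sqrt 2 + 1 \<Longrightarrow> wmr1_weight tau True = tau"
  by (simp add: wmr1_weight_def)

lemma wmr1_weight_strong_large:
  "sqrt 2 + 1 \<le> tau \<Longrightarrow> wmr1_weight tau True = (tau + 1) / (tau - 1)"
  by (simp add: wmr1_weight_def)

lemma wmr1_weight_strong_ge_1:
  assumes "1 \<le> tau"
  shows "1 \<le> wmr1_weight tau True"
proof (cases "sqrt 2 + 1 \<le> tau")
  case True
  have "1 < sqrt 2" by simp
  with True have "0 < tau - 1" by linarith
  with True show ?thesis by (simp add: wmr1_weight_strong_large field_simps)
next
  case False
  with assms show ?thesis by (simp add: wmr1_weight_strong_small)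
qed

definition wmr1_step_bound :: "real \<Rightarrow> real" where
  "wmr1_step_bound tau = max ((3 * tau - 1) / (tau + 1)) ((tau + 2) / tau)"

lemma wmr1_step_bound_ge_weight:
  assumes "1 \<le> tau"
  shows "1 + 2 / wmr1_weight tau True \<le> wmr1_step_bound tau"
proof (cases "sqrt 2 + 1 \<le> tau")
  case True
  have "1 < sqrt 2" by simp
  with True have "0 < tau - 1" by linarith
  with True have "1 + 2 / wmr1_weight tau True = (3 * tau - 1) / (tau + 1)"
    by (simp add: wmr1_weight_strong_large field_simps)
  then show ?thesis unfolding wmr1_step_bound_def by linarith
next
  case False
  with assms have "1 + 2 / wmr1_weight tau True = (tau + 2) / tau"
    by (simp add: wmr1_weight_strong_small field_simps)
  then show ?thesis unfolding wmr1_step_bound_def by linarith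
qed

lemma wmr1_step_bound_ge_1:
  assumes "1 \<le> tau"
  shows "1 \<le> wmr1_step_bound tau"
proof -
  have "0 \<le> 2 / wmr1_weight tau True"
    using wmr1_weight_strong_ge_1[OF assms] by simp
  with wmr1_step_bound_ge_weight[OF assms] show ?thesis by linarith
qed

lemma wmr1_step_bound_times_tau:
  assumes "1 \<le> tau"
  shows "tau + 2 \<le> wmr1_step_bound tau * tau"
proof -
  have "(tau + 2) / tau \<le> wmr1_step_bound tau"
    unfolding wmr1_step_bound_def by simp
  with assms show ?thesis by (simp add: field_simps)
qed

lemma wmr1_step_bound_weight_gap:
  assumes tau: "1 \<le> tau"
  shows "(tau - wmr1_step_bound tau) * wmr1_weight tau True \<le> tau - 1"
proof (cases "sqrt 2 + 1 \<le> tau")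
  case True
  have "1 < sqrt 2" by simp
  with True have pos: "0 < tau - 1" by linarith
  have "(3 * tau - 1) / (tau + 1) \<le> wmr1_step_bound tau"
    unfolding wmr1_step_bound_def by simp
  with pos have "(tau - wmr1_step_bound tau) * (tau + 1) \<le> (tau - 1) * (tau - 1)"
    by (simp add: field_simps)
  with pos have "(tau - wmr1_step_bound tau) * ((tau + 1) / (tau - 1)) \<le> tau - 1"
    by (simp add: field_simps)
  then show ?thesis by (simp add: wmr1_weight_strong_large True)
next
  case False
  then have "tau - 1 \<le> sqrt 2" by linarith
  then have "(tau - 1) * (tau - 1) \<le> sqrt 2 * sqrt 2"
    using tau by (intro mult_mono) auto
  then have "tau * tau - tau - 2 \<le> tau - 1" by (simp add: algebra_simps)
  moreover have "(tau - wmr1_step_bound tau) * tau \<le> tau * tau - tau - 2"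
    using wmr1_step_bound_times_tau[OF tau] by (simp add: algebra_simps)
  ultimately show ?thesis using False by (simp add: wmr1_weight_strong_small)
qed

subsection \<open>Charging the voters against the tournament\<close>

lemma consistent_prefs_asym:
  "consistent_prefs d N vloc C cloc pref \<Longrightarrow> i \<in> N \<Longrightarrow> P \<in> C \<Longrightarrow> Q \<in> C \<Longrightarrow> P \<noteq> Q \<Longrightarrow>
    pref i P Q \<longleftrightarrow> \<not> pref i Q P"
  unfolding consistent_prefs_def by blast

lemma consistent_prefs_closer:
  "consistent_prefs d N vloc C cloc pref \<Longrightarrow> i \<in> N \<Longrightarrow> P \<in> C \<Longrightarrow> Q \<in> C \<Longrightarrow> P \<noteq> Q \<Longrightarrow>
    pref i P Q \<Longrightarrow> d (vloc i) (cloc P) \<le> d (vloc i) (cloc Q)"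
  unfolding consistent_prefs_def by blast

lemma wmr1_tournament_support_le:
  "wmr1_tournament d N vloc C cloc pref tau beats \<Longrightarrow> P \<in> C \<Longrightarrow> Q \<in> C \<Longrightarrow> P \<noteq> Q \<Longrightarrow>
    beats P Q \<Longrightarrow> wmr1_support d N vloc cloc pref tau Q P \<le> wmr1_support d N vloc cloc pref tau P Q"
  unfolding wmr1_tournament_def by blast

lemma sum_nonpos_if_beats:
  assumes fin: "finite N" and cons: "consistent_prefs d N vloc C cloc pref"
    and tour: "wmr1_tournament d N vloc C cloc pref tau beats"
    and PQ: "P \<in> C" "Q \<in> C" "P \<noteq> Q" "beats P Q" and L: "0 \<le> L"
    and winner: "\<And>i. i \<in> N \<Longrightarrow> pref i P Q \<Longrightarrow>
      g i \<le> - L * wmr1_weight tau (strong_pref d vloc cloc tau i P Q)"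
    and loser: "\<And>i. i \<in> N \<Longrightarrow> pref i Q P \<Longrightarrow>
      g i \<le> L * wmr1_weight tau (strong_pref d vloc cloc tau i Q P)"
  shows "sum g N \<le> 0"
proof -
  let ?A = "{i \<in> N. pref i P Q}" and ?B = "{i \<in> N. pref i Q P}"
  have "N = ?A \<union> ?B" "?A \<inter> ?B = {}"
    using consistent_prefs_asym[OF cons _ PQ(1-3)] by blast+
  with fin have "sum g N = sum g ?A + sum g ?B"
    by (metis finite_Un sum.union_disjoint)
  moreover have "sum g ?A \<le> - L * wmr1_support d N vloc cloc pref tau P Q"
    unfolding wmr1_support_def sum_distrib_left using winner by (intro sum_mono) auto
  moreover have "sum g ?B \<le> L * wmr1_support d N vloc cloc pref tau Q P"
    unfolding wmr1_support_def sum_distrib_left using loser by (intro sum_mono) auto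
  moreover have "L * wmr1_support d N vloc cloc pref tau Q P
      \<le> L * wmr1_support d N vloc cloc pref tau P Q"
    using wmr1_tournament_support_le[OF tour PQ] L by (rule mult_left_mono)
  ultimately show ?thesis by linarith
qed

lemma sum_nonpos_if_beats_by_strength:
  assumes fin: "finite N" and cons: "consistent_prefs d N vloc C cloc pref"
    and tour: "wmr1_tournament d N vloc C cloc pref tau beats"
    and PQ: "P \<in> C" "Q \<in> C" "P \<noteq> Q" "beats P Q" and L: "0 \<le> L"
  defines "p \<equiv> \<lambda>i. d (vloc i) (cloc P)" and "q \<equiv> \<lambda>i. d (vloc i) (cloc Q)"
    and "w \<equiv> wmr1_weight tau True"
  assumes strong_winner: "\<And>i. i \<in> N \<Longrightarrow> p i \<le> q i \<Longrightarrow> tau * p i < q i \<Longrightarrow> g i \<le> - L * w"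
    and weak_winner: "\<And>i. i \<in> N \<Longrightarrow> p i \<le> q i \<Longrightarrow> q i \<le> tau * p i \<Longrightarrow> g i \<le> - L"
    and strong_loser: "\<And>i. i \<in> N \<Longrightarrow> q i \<le> p i \<Longrightarrow> tau * q i < p i \<Longrightarrow> g i \<le> L * w"
    and weak_loser: "\<And>i. i \<in> N \<Longrightarrow> q i \<le> p i \<Longrightarrow> p i \<le> tau * q i \<Longrightarrow> g i \<le> L"
  shows "sum g N \<le> 0"
proof (rule sum_nonpos_if_beats[OF fin cons tour PQ L])
  fix i assume i: "i \<in> N" and "pref i P Q"
  then have pq: "p i \<le> q i"
    using consistent_prefs_closer[OF cons i PQ(1-3)] by (simp add: p_def q_def)
  show "g i \<le> - L * wmr1_weight tau (strong_pref d vloc cloc tau i P Q)"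
  proof (cases "tau * p i < q i")
    case True
    then show ?thesis using strong_winner[OF i pq True]
      by (simp add: strong_pref_def p_def q_def w_def)
  next
    case False
    then show ?thesis using weak_winner[OF i pq] 
      by (simp add: strong_pref_def p_def q_def)
  qed
next
  fix i assume i: "i \<in> N" and "pref i Q P"
  then have qp: "q i \<le> p i"
    using consistent_prefs_closer[OF cons i PQ(2,1) PQ(3)[symmetric]] by (simp add: p_def q_def)
  show "g i \<le> L * wmr1_weight tau (strong_pref d vloc cloc tau i Q P)"
  proof (cases "tau * q i < p i")
    case True
    then show ?thesis using strong_loser[OF i qp True]
      by (simp add: strong_pref_def p_def q_def w_def)
  next
    case False
    then show ?thesis using weak_loser[OF i qp]
      by (simp add: strong_pref_def p_def q_def)
  qed
qed

subsection \<open>One edge of the tournament\<close>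

text \<open>
  In the next four lemmas p, q are the distances of a voter to the winner P and the
  loser Q, and D = d(P,Q).
\<close>

lemma strong_supporter_of_winner_step:
  fixes p q D f tau :: real
  assumes "1 \<le> tau" "tau + 2 \<le> f * tau" "0 \<le> p" "0 \<le> q" "D \<le> p + q" "tau * p < q"
  shows "p - f * q \<le> - D"
proof -
  have "(tau + 2) * q \<le> (f * tau) * q" "tau * D \<le> tau * (p + q)"
    using assms by (auto intro: mult_right_mono mult_left_mono)
  then have "tau * (p - f * q) \<le> tau * (- D)"
    using assms by (simp add: algebra_simps)
  then show ?thesis
    by (rule mult_left_le_imp_le) (use assms(1) in linarith)
qed

lemma weak_supporter_of_winner_step:
  fixes p q D f w :: real
  assumes "0 < w" "1 + 2 / w \<le> f" "0 \<le> q" "D \<le> p + q" "p \<le> q"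
  shows "p - f * q \<le> - (D / w)"
proof -
  have "(2 / w) * q \<le> (f - 1) * q"
    using assms by (intro mult_right_mono) auto
  moreover have "D / w \<le> (2 * q) / w"
    using assms by (intro divide_right_mono) auto
  ultimately show ?thesis using assms by (simp add: algebra_simps)
qed

lemma strong_supporter_of_loser_step:
  fixes p q D f :: real
  assumes "1 \<le> f" "0 \<le> q" "p \<le> q + D"
  shows "p - f * q \<le> D"
  using assms mult_right_mono[of 1 f q] by simp

lemma weak_supporter_of_loser_step:
  fixes p q D f w tau :: real
  assumes "0 < w" "1 \<le> f" "0 \<le> D" "0 \<le> q" "p \<le> q + D" "q \<le> p" "p \<le> tau * q"
    and weight: "(tau - f) * w \<le> tau - 1"
  shows "p - f * q \<le> D / w"
proof (cases "f < tau")
  case False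
  have "p - f * q \<le> (tau - f) * q"
    using assms by (simp add: algebra_simps)
  also have "\<dots> \<le> 0"
    using False assms by (simp add: mult_nonpos_nonneg)
  also have "0 \<le> D / w"
    using assms by simp
  finally show ?thesis .
next
  case True
  \<comment> \<open>a convex combination of p - q \<le> D and p - \<tau> q \<le> 0\<close>
  have "(tau - 1) * (p - f * q) = (tau - f) * (p - q) + (f - 1) * (p - tau * q)"
    by (simp add: algebra_simps)
  also have "\<dots> \<le> (tau - f) * D"
  proof -
    have "(tau - f) * (p - q) \<le> (tau - f) * D"
      using True assms by (intro mult_left_mono) auto
    moreover have "(f - 1) * (p - tau * q) \<le> 0"
      using assms by (intro mult_nonneg_nonpos) auto
    ultimately show ?thesis by linarith
  qed
  also have "\<dots> \<le> (tau - 1) * (D / w)"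
  proof -
    have "(tau - f) * w * D \<le> (tau - 1) * D"
      using weight assms by (intro mult_right_mono) auto
    with assms show ?thesis by (simp add: field_simps)
  qed
  finally show ?thesis
    by (rule mult_left_le_imp_le) (use True assms in linarith)
qed

lemma social_cost_le_step_bound_if_beats:
  assumes ms: "Metric_space M d" and fin: "finite N" and "vloc ` N \<subseteq> M" "cloc ` C \<subseteq> M"
    and tau: "1 \<le> tau" and cons: "consistent_prefs d N vloc C cloc pref"
    and tour: "wmr1_tournament d N vloc C cloc pref tau beats"
    and PQ: "P \<in> C" "Q \<in> C" "P \<noteq> Q" "beats P Q"
  shows "social_cost d N vloc (cloc P) \<le> wmr1_step_bound tau * social_cost d N vloc (cloc Q)"
proof -
  define f w D where "f = wmr1_step_bound tau" and "w = wmr1_weight tau True"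
    and "D = d (cloc P) (cloc Q)"
  have w: "0 < w" using wmr1_weight_strong_ge_1[OF tau] by (simp add: w_def)
  have D: "0 \<le> D" using Metric_space.nonneg[OF ms] by (simp add: D_def)
  have tri: "D \<le> d (vloc i) (cloc P) + d (vloc i) (cloc Q)"
      "d (vloc i) (cloc P) \<le> d (vloc i) (cloc Q) + D"
      "d (vloc i) (cloc Q) \<le> d (vloc i) (cloc P) + D" if "i \<in> N" for i
    using that assms(3,4) PQ Metric_space.triangle[OF ms] Metric_space.triangle'[OF ms]
      Metric_space.triangle''[OF ms] unfolding D_def by (meson image_subset_iff)+
  have f: "1 \<le> f" "tau + 2 \<le> f * tau" "1 + 2 / w \<le> f" "(tau - f) * w \<le> tau - 1"
    using wmr1_step_bound_ge_1[OF tau] wmr1_step_bound_times_tau[OF tau]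
      wmr1_step_bound_ge_weight[OF tau] wmr1_step_bound_weight_gap[OF tau]
    unfolding f_def w_def by auto
  note nonneg = Metric_space.nonneg[OF ms]
  have "(\<Sum>i\<in>N. d (vloc i) (cloc P) - f * d (vloc i) (cloc Q)) \<le> 0"
  proof (rule sum_nonpos_if_beats_by_strength[OF fin cons tour PQ, where L = "D / w"])
    show "0 \<le> D / w" using D w by simp
  next
    fix i assume "i \<in> N" "d (vloc i) (cloc P) \<le> d (vloc i) (cloc Q)"
      "tau * d (vloc i) (cloc P) < d (vloc i) (cloc Q)"
    with strong_supporter_of_winner_step[OF tau f(2) nonneg nonneg tri(1)] w
    show "d (vloc i) (cloc P) - f * d (vloc i) (cloc Q) \<le> - (D / w) * wmr1_weight tau True"
      by (simp add: w_def)
  next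
    fix i assume "i \<in> N" "d (vloc i) (cloc P) \<le> d (vloc i) (cloc Q)"
    with weak_supporter_of_winner_step[OF w f(3) nonneg tri(1)]
    show "d (vloc i) (cloc P) - f * d (vloc i) (cloc Q) \<le> - (D / w)"
      by simp
  next
    fix i assume "i \<in> N"
    with strong_supporter_of_loser_step[OF f(1) nonneg tri(2)] w
    show "d (vloc i) (cloc P) - f * d (vloc i) (cloc Q) \<le> D / w * wmr1_weight tau True"
      by (simp add: w_def)
  next
    fix i assume "i \<in> N" "d (vloc i) (cloc Q) \<le> d (vloc i) (cloc P)"
      "d (vloc i) (cloc P) \<le> tau * d (vloc i) (cloc Q)"
    with weak_supporter_of_loser_step[OF w f(1) D nonneg tri(2) _ _ f(4)]
    show "d (vloc i) (cloc P) - f * d (vloc i) (cloc Q) \<le> D / w"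
      by simp
  qed
  then show ?thesis
    by (simp add: social_cost_def f_def sum_subtractf sum_distrib_left)
qed

subsection \<open>A detour through an arbitrary candidate\<close>

text \<open>
  In this section a voter is at distances p, q, z from P, Q, Z, and x = d(Z,P),
  y = d(Z,Q). For \<tau> \<le> 2 and for \<tau> \<ge> 3 the multiplier below makes
  p - q - 2z \<le> L \<times> (signed weight) hold for every voter.
\<close>

definition detour_multiplier :: "real \<Rightarrow> real \<Rightarrow> real \<Rightarrow> real" where
  "detour_multiplier tau x y =
     (if 3 \<le> tau then max 0 (x - y)
      else max 0 (max ((x - y) / tau) (min (x - y) ((tau - 1) * y))))"

lemma detour_multiplier_nonneg: "0 \<le> detour_multiplier tau x y"
  by (simp add: detour_multiplier_def)

lemma strong_supporter_of_winner_detour: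
  fixes p q z x y tau :: real
  assumes "x \<le> z + p" "q \<le> z + y" "tau * p < q" "1 \<le> tau" "tau \<le> 3"
    "0 \<le> p" "0 \<le> y" "0 \<le> z"
  shows "p - q - 2 * z \<le> - (tau * min (x - y) ((tau - 1) * y))"
proof -
  \<comment> \<open>the combination with weights 3 - \<tau> and 2\<tau> - 2 of the bounds
      p - q - 2z \<le> 2p - 2q - x + y and p - q - 2z \<le> 3p - q - 2x\<close>
  have "(3 - tau) * (p - q - 2 * z) \<le> (3 - tau) * (2 * p - 2 * q - x + y)"
    using assms by (intro mult_left_mono) auto
  moreover have "(2 * tau - 2) * (p - q - 2 * z) \<le> (2 * tau - 2) * (3 * p - q - 2 * x)"
    using assms by (intro mult_left_mono) auto
  ultimately have "(1 + tau) * (p - q - 2 * z) \<le> (3 - tau) * y - (3 * tau - 1) * x"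
    using assms by (simp add: algebra_simps)
  also have "\<dots> \<le> (1 + tau) * (- (tau * min (x - y) ((tau - 1) * y)))"
  proof (cases "x \<le> tau * y")
    case True
    have "(tau - 1)\<^sup>2 * x \<le> (tau - 1)\<^sup>2 * (tau * y)"
      using True by (intro mult_left_mono) auto
    moreover have "(tau - 3) * (tau + 1) * ((tau - 1) * y) \<le> 0"
      using assms by (intro mult_nonpos_nonneg) (auto intro: mult_nonpos_nonneg)
    ultimately show ?thesis
      using True by (simp add: algebra_simps power2_eq_square min_def)
  next
    case False
    have "(3 * tau - 1) * (tau * y) \<le> (3 * tau - 1) * x"
      using False assms by (intro mult_left_mono) auto
    moreover have "(tau - 3) * ((tau - 1) * (tau + 1)) * y \<le> 0"
      using assms by (intro mult_nonpos_nonneg) auto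
    ultimately show ?thesis
      using False by (simp add: algebra_simps min_def)
  qed
  finally show ?thesis
    by (rule mult_left_le_imp_le) (use assms in linarith)
qed

lemma weak_supporter_of_loser_detour:
  fixes p q z y tau :: real
  assumes "q \<le> z + y" "p \<le> tau * q" "1 \<le> tau" "tau \<le> 3" "0 \<le> z"
  shows "p - q - 2 * z \<le> (tau - 1) * y"
proof -
  have "p - q \<le> (tau - 1) * (z + y)"
    using assms mult_left_mono[of q "z + y" "tau - 1"] by (simp add: algebra_simps)
  moreover have "(tau - 3) * z \<le> 0"
    using assms by (simp add: mult_nonpos_nonneg)
  ultimately show ?thesis by (simp add: algebra_simps)
qed

lemma detour_voter_bounds_large_tau:
  fixes p q z x y tau w :: real
  assumes "0 \<le> x" "0 \<le> y" "0 \<le> z" "0 \<le> p"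
    and tri: "x \<le> z + p" "p \<le> z + x" "y \<le> z + q" "q \<le> z + y"
    and tau: "3 \<le> tau" and w: "1 \<le> w" "w \<le> 2"
  defines "L \<equiv> max 0 (x - y)"
  shows "p \<le> q \<Longrightarrow> tau * p < q \<Longrightarrow> p - q - 2 * z \<le> - L * w"
    and "p \<le> q \<Longrightarrow> p - q - 2 * z \<le> - L"
    and "p - q - 2 * z \<le> L * w"
    and "p - q - 2 * z \<le> L"
proof -
  have "L * w \<le> x * 2"
    using assms by (intro mult_mono) (auto simp: L_def)
  moreover have "3 * p \<le> tau * p"
    using assms by (intro mult_right_mono) auto
  ultimately show "p \<le> q \<Longrightarrow> tau * p < q \<Longrightarrow> p - q - 2 * z \<le> - L * w"
    using tri by linarith
  show "p \<le> q \<Longrightarrow> p - q - 2 * z \<le> - L"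
    using tri assms by (simp add: L_def)
  show "p - q - 2 * z \<le> L"
    using tri by (simp add: L_def)
  moreover have "L \<le> L * w"
    using mult_left_mono[OF w(1), of L] by (simp add: L_def)
  ultimately show "p - q - 2 * z \<le> L * w" by linarith
qed

lemma detour_voter_bounds_small_tau:
  fixes p q z x y tau :: real
  assumes "0 \<le> x" "0 \<le> y" "0 \<le> z" "0 \<le> p"
    and tri: "x \<le> z + p" "p \<le> z + x" "y \<le> z + q" "q \<le> z + y"
    and tau: "1 \<le> tau" "tau \<le> 3"
  defines "m \<equiv> min (x - y) ((tau - 1) * y)"
  defines "L \<equiv> max 0 (max ((x - y) / tau) m)"
  shows "p \<le> q \<Longrightarrow> tau * p < q \<Longrightarrow> p - q - 2 * z \<le> - L * tau"
    and "p \<le> q \<Longrightarrow> p - q - 2 * z \<le> - L"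
    and "p - q - 2 * z \<le> L * tau"
    and "p \<le> tau * q \<Longrightarrow> p - q - 2 * z \<le> L"
proof -
  have div: "(x - y) / tau * tau = x - y"
    using tau by simp
  have "(x - y) / tau \<le> max 0 (x - y) / 1"
    using tau by (intro frac_le) auto
  then have "L \<le> max 0 (x - y)"
    by (simp add: L_def m_def)
  then show "p \<le> q \<Longrightarrow> p - q - 2 * z \<le> - L"
    using tri assms by linarith
  show "p \<le> q \<Longrightarrow> tau * p < q \<Longrightarrow> p - q - 2 * z \<le> - L * tau"
    using strong_supporter_of_winner_detour[of x z p q y tau] assms div
    by (auto simp: L_def m_def max_def algebra_simps)
  have "(x - y) / tau \<le> L"
    by (simp add: L_def)
  with div tau have "x - y \<le> L * tau"
    by (metis mult_right_mono zero_le_one order_trans)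
  with tri show "p - q - 2 * z \<le> L * tau" by linarith
  show "p \<le> tau * q \<Longrightarrow> p - q - 2 * z \<le> L"
    using weak_supporter_of_loser_detour[of q z y p tau] tri assms
    by (auto simp: L_def m_def)
qed

lemma detour_voter_bounds:
  fixes p q z x y tau :: real
  assumes nonneg: "0 \<le> x" "0 \<le> y" "0 \<le> z" "0 \<le> p"
    and tri: "x \<le> z + p" "p \<le> z + x" "y \<le> z + q" "q \<le> z + y"
    and tau: "1 \<le> tau" "tau \<le> 2 \<or> 3 \<le> tau"
  defines "L \<equiv> detour_multiplier tau x y" and "w \<equiv> wmr1_weight tau True"
  shows "p \<le> q \<Longrightarrow> tau * p < q \<Longrightarrow> p - q - 2 * z \<le> - L * w"
    and "p \<le> q \<Longrightarrow> q \<le> tau * p \<Longrightarrow> p - q - 2 * z \<le> - L"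
    and "q \<le> p \<Longrightarrow> tau * q < p \<Longrightarrow> p - q - 2 * z \<le> L * w"
    and "q \<le> p \<Longrightarrow> p \<le> tau * q \<Longrightarrow> p - q - 2 * z \<le> L"
proof -
  have "1 < sqrt 2" "sqrt 2 < 2"
    using sqrt2_less_2 by simp_all
  then have large: "L = max 0 (x - y) \<and> 1 \<le> w \<and> w \<le> 2" if "3 \<le> tau"
    using that wmr1_weight_strong_ge_1[OF tau(1)]
    by (simp add: L_def w_def detour_multiplier_def wmr1_weight_strong_large field_simps)
  have small: "L = max 0 (max ((x - y) / tau) (min (x - y) ((tau - 1) * y))) \<and> w = tau"
    if "\<not> 3 \<le> tau"
  proof -
    from that tau \<open>1 < sqrt 2\<close> have "tau < sqrt 2 + 1" by linarith
    with that show ?thesis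
      by (simp add: L_def w_def detour_multiplier_def wmr1_weight_strong_small)
  qed
  note B = detour_voter_bounds_large_tau[OF nonneg tri, of tau w]
    and S = detour_voter_bounds_small_tau[OF nonneg tri tau(1)]
  show "p \<le> q \<Longrightarrow> tau * p < q \<Longrightarrow> p - q - 2 * z \<le> - L * w"
    using large B(1) small S(1) by (cases "3 \<le> tau") auto
  show "p \<le> q \<Longrightarrow> q \<le> tau * p \<Longrightarrow> p - q - 2 * z \<le> - L"
    using large B(2) small S(2) by (cases "3 \<le> tau") auto
  show "q \<le> p \<Longrightarrow> tau * q < p \<Longrightarrow> p - q - 2 * z \<le> L * w"
    using large B(3) small S(3) by (cases "3 \<le> tau") auto
  show "q \<le> p \<Longrightarrow> p \<le> tau * q \<Longrightarrow> p - q - 2 * z \<le> L"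
    using large B(4) small S(4) by (cases "3 \<le> tau") auto
qed

lemma social_cost_le_detour_if_beats:
  assumes ms: "Metric_space M d" and fin: "finite N" and "vloc ` N \<subseteq> M" "cloc ` C \<subseteq> M"
    and tau: "1 \<le> tau" "tau \<le> 2 \<or> 3 \<le> tau" and cons: "consistent_prefs d N vloc C cloc pref"
    and tour: "wmr1_tournament d N vloc C cloc pref tau beats"
    and PQ: "P \<in> C" "Q \<in> C" "P \<noteq> Q" "beats P Q" and Z: "Z \<in> C"
  shows "social_cost d N vloc (cloc P)
    \<le> social_cost d N vloc (cloc Q) + 2 * social_cost d N vloc (cloc Z)"
proof -
  define x y where "x = d (cloc Z) (cloc P)" and "y = d (cloc Z) (cloc Q)"
  note nonneg = Metric_space.nonneg[OF ms]
  have tri: "x \<le> d (vloc i) (cloc Z) + d (vloc i) (cloc P)"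
      "d (vloc i) (cloc P) \<le> d (vloc i) (cloc Z) + x"
      "y \<le> d (vloc i) (cloc Z) + d (vloc i) (cloc Q)"
      "d (vloc i) (cloc Q) \<le> d (vloc i) (cloc Z) + y" if "i \<in> N" for i
    using that assms(3,4) PQ Z Metric_space.triangle[OF ms] Metric_space.triangle''[OF ms]
    unfolding x_def y_def by (meson image_subset_iff)+
  have "0 \<le> x" "0 \<le> y"
    using nonneg by (simp_all add: x_def y_def)
  note V = detour_voter_bounds[OF this nonneg nonneg tri tau]
  have "(\<Sum>i\<in>N. d (vloc i) (cloc P) - d (vloc i) (cloc Q) - 2 * d (vloc i) (cloc Z)) \<le> 0"
    by (rule sum_nonpos_if_beats_by_strength[OF fin cons tour PQ detour_multiplier_nonneg[of tau x y]])
      (rule V; assumption)+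
  then show ?thesis
    by (simp add: social_cost_def sum_subtractf sum_distrib_left)
qed

subsection \<open>Paths of length two\<close>

lemma wmr1_step_bound_less_2:
  assumes "2 < tau" "tau < 3"
  shows "wmr1_step_bound tau < 2"
  using assms by (simp add: wmr1_step_bound_def field_simps)

lemma social_cost_le_two_steps:
  assumes ms: "Metric_space M d" and fin: "finite N" and loc: "vloc ` N \<subseteq> M" "cloc ` C \<subseteq> M"
    and tau: "1 \<le> tau" and cons: "consistent_prefs d N vloc C cloc pref"
    and tour: "wmr1_tournament d N vloc C cloc pref tau beats"
    and C: "P \<in> C" "Q \<in> C" "Z \<in> C" and dist: "P \<noteq> Q" "Q \<noteq> Z"
    and win: "beats P Q" "beats Q Z"
  defines "f \<equiv> wmr1_step_bound tau" and "SC \<equiv> \<lambda>X. social_cost d N vloc (cloc X)"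
  shows "SC P \<le> min (f + 2) (f\<^sup>2) * SC Z"
proof -
  note step = social_cost_le_step_bound_if_beats[OF ms fin loc tau cons tour]
  have PQ: "SC P \<le> f * SC Q" and QZ: "SC Q \<le> f * SC Z"
    using step[OF C(1,2) dist(1) win(1)] step[OF C(2,3) dist(2) win(2)]
    unfolding f_def SC_def by simp_all
  have f: "1 \<le> f" unfolding f_def using wmr1_step_bound_ge_1[OF tau] .
  have "f * SC Q \<le> f * (f * SC Z)"
    using QZ f by (intro mult_left_mono) auto
  with PQ have square: "SC P \<le> f\<^sup>2 * SC Z"
    by (simp add: power2_eq_square mult.assoc)
  have "SC P \<le> (f + 2) * SC Z"
  proof (cases "tau \<le> 2 \<or> 3 \<le> tau")
    case True
    have "SC P \<le> SC Q + 2 * SC Z"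
      using social_cost_le_detour_if_beats[OF ms fin loc tau True cons tour C(1,2) dist(1) win(1) C(3)]
      unfolding SC_def .
    with QZ show ?thesis by (simp add: algebra_simps)
  next
    case False
    then have "f < 2" unfolding f_def by (intro wmr1_step_bound_less_2) auto
    then have "f * f \<le> 2 * f"
      using f by (intro mult_right_mono) auto
    with \<open>f < 2\<close> have "f\<^sup>2 \<le> f + 2"
      by (simp add: power2_eq_square)
    moreover have "0 \<le> SC Z"
      unfolding SC_def social_cost_def using Metric_space.nonneg[OF ms] by (simp add: sum_nonneg)
    ultimately have "f\<^sup>2 * SC Z \<le> (f + 2) * SC Z"
      by (rule mult_right_mono)
    with square show ?thesis by linarith
  qed
  with square show ?thesis by (simp add: min_def)
qed

lemma uncovered_reaches_in_two_steps:
  assumes "uncovered C beats P" "Z \<in> C"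
  obtains "Z = P"
    | "Z \<noteq> P" "beats P Z"
    | Q where "Q \<in> C" "P \<noteq> Q" "Q \<noteq> Z" "beats P Q" "beats Q Z"
  using assms unfolding uncovered_def by blast

lemma social_cost_le_if_uncovered:
  assumes ms: "Metric_space M d" and fin: "finite N" and loc: "vloc ` N \<subseteq> M" "cloc ` C \<subseteq> M"
    and tau: "1 \<le> tau" and cons: "consistent_prefs d N vloc C cloc pref"
    and tour: "wmr1_tournament d N vloc C cloc pref tau beats"
    and unc: "uncovered C beats P" and Z: "Z \<in> C"
  defines "f \<equiv> wmr1_step_bound tau" and "SC \<equiv> \<lambda>X. social_cost d N vloc (cloc X)"
  shows "SC P \<le> min (f + 2) (f\<^sup>2) * SC Z"
proof -
  have f: "1 \<le> f" "f \<le> min (f + 2) (f\<^sup>2)"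
    using wmr1_step_bound_ge_1[OF tau] by (auto simp: f_def power2_eq_square)
  have SC: "0 \<le> SC X" for X
    using Metric_space.nonneg[OF ms] by (simp add: SC_def social_cost_def sum_nonneg)
  have P: "P \<in> C" using unc by (simp add: uncovered_def)
  from unc Z show ?thesis
  proof (cases rule: uncovered_reaches_in_two_steps)
    case 1
    with mult_right_mono[OF order_trans[OF f] SC] show ?thesis by simp
  next
    case 2
    then have "SC P \<le> f * SC Z"
      using social_cost_le_step_bound_if_beats[OF ms fin loc tau cons tour P Z]
      by (simp add: f_def SC_def)
    also have "\<dots> \<le> min (f + 2) (f\<^sup>2) * SC Z"
      using f(2) SC by (rule mult_right_mono)
    finally show ?thesis .
  next
    case (3 Q)
    with social_cost_le_two_steps[OF ms fin loc tau cons tour P _ Z] show ?thesis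
      by (simp add: f_def SC_def)
  qed
qed

theorem mainTheorem6:
  fixes M :: "'a set" and d :: "'a \<Rightarrow> 'a \<Rightarrow> real"
    and N :: "'v set" and vloc :: "'v \<Rightarrow> 'a"
    and C :: "'c set" and cloc :: "'c \<Rightarrow> 'a"
    and pref :: "'v \<Rightarrow> 'c \<Rightarrow> 'c \<Rightarrow> bool" and beats :: "'c \<Rightarrow> 'c \<Rightarrow> bool"
    and tau :: real and P :: 'c
  assumes "Metric_space M d"
    and "finite N" and "N \<noteq> {}" and "vloc ` N \<subseteq> M"
    and "finite C" and "cloc ` C \<subseteq> M"
    and "tau \<ge> 1"
    and "consistent_prefs d N vloc C cloc pref"
    and "wmr1_tournament d N vloc C cloc pref tau beats"
    and "uncovered C beats P"
  shows "\<forall>Z\<in>C. social_cost d N vloc (cloc P) \<le>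
           min (max ((3 * tau - 1) / (tau + 1)) ((tau + 2) / tau) + 2)
               (max (((3 * tau - 1) / (tau + 1))\<^sup>2) (((tau + 2) / tau)\<^sup>2))
           * social_cost d N vloc (cloc Z)"
proof
  fix Z assume "Z \<in> C"
  have "max (((3 * tau - 1) / (tau + 1))\<^sup>2) (((tau + 2) / tau)\<^sup>2) = (wmr1_step_bound tau)\<^sup>2"
    using \<open>tau \<ge> 1\<close> by (simp add: wmr1_step_bound_def max_def power_mono)
  with social_cost_le_if_uncovered[OF assms(1,2,4,6,7,8,9,10) \<open>Z \<in> C\<close>]
  show "social_cost d N vloc (cloc P) \<le>
           min (max ((3 * tau - 1) / (tau + 1)) ((tau + 2) / tau) + 2)
               (max (((3 * tau - 1) / (tau + 1))\<^sup>2) (((tau + 2) / tau)\<^sup>2))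
           * social_cost d N vloc (cloc Z)"
    by (simp add: wmr1_step_bound_def)
qed

end
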